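(* Let $\vec{B}_1,\dots,\vec{B}_d$ ($d\in\mathbb{N}$) be mutually coorthogonal blades in $\mathcal{G}^{p,q}$ with $\vec{B}_k^2\in\mathbb{R}\setminus\{0\}$ (so $\vec B_k^{-1}=\vec B_k\vec B_k^{-2}$), let $\vec{A}\in\mathcal{G}^{p,q}$ and $\vec{j}=(j_1,\dots,j_d)\in\{0,1\}^d$. Then for every permutation $\sigma$ of $\{1,\dots,d\}$, $$\vec{A}_{\vec c^{(j_{\sigma(1)},\dots,j_{\sigma(d)})}(\overrightarrow{\vec B_{\sigma(1)},\dots,\vec B_{\sigma(d)}})}=\vec{A}_{\vec c^{\vec j}(\overrightarrow{\vec B_1,\dots,\vec B_d})}\quad\text{and}\quad \vec{A}_{\vec c^{(j_{\sigma(1)},\dots,j_{\sigma(d)})}(\overleftarrow{\vec B_{\sigma(1)},\dots,\vec B_{\sigma(d)}})}=\vec{A}_{\vec c^{\vec j}(\overleftarrow{\vec B_1,\dots,\vec B_d})},$$ i.e. these expressions do not depend on the order of the blades.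
   Context: $\mathcal{G}^{p,q}$ is the real geometric algebra of $\mathbb{R}^{p,q}$. Blades $\vec A,\vec B$ are coorthogonal if $\vec A\vec B=\pm\vec B\vec A$. For an invertible $\vec B$ and any $\vec A$: $\vec{A}_{\vec c^0(\vec{B})}=\frac12(\vec{A}+\vec{B}^{-1}\vec{A}\vec{B})$, $\vec{A}_{\vec c^1(\vec{B})}=\frac12(\vec{A}-\vec{B}^{-1}\vec{A}\vec{B})$. For an ordered tuple $(\vec B_1,\dots,\vec B_d)$ of invertible elements and $\vec j\in\{0,1\}^d$: $\vec{A}_{\vec c^{\vec{j}}(\overrightarrow{\vec B_1,\dots,\vec B_d})}=((\vec{A}_{\vec c^{j_1}(\vec{B}_1)})_{\vec c^{j_2}(\vec{B}_2)}\cdots)_{\vec c^{j_d}(\vec{B}_d)}$ and $\vec{A}_{\vec c^{\vec{j}}(\overleftarrow{\vec B_1,\dots,\vec B_d})}=((\vec{A}_{\vec c^{j_d}(\vec{B}_d)})_{\vec c^{j_{d-1}}(\vec{B}_{d-1})}\cdots)_{\vec c^{j_1}(\vec{B}_1)}$. *)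

theory Defs
  imports Complex_Main "HOL-Combinatorics.Permutations"
begin

text \<open>Orthonormal basis e_0,...,e_{n-1} (n = p+q), with e_i^2 = 1 for i < p and
  e_i^2 = -1 for p \<le> i < p+q.  A multivector is a coefficient function on
  basis blades e_S indexed by finite subsets S of {0..<p+q}; it is an element
  of G^{p,q} iff its coefficients vanish outside Pow {0..<p+q}.\<close>

type_synonym mv = "nat set \<Rightarrow> real"

definition sig :: "nat \<Rightarrow> nat \<Rightarrow> nat \<Rightarrow> real" where
  "sig p q i = (if i < p then 1 else if i < p + q then -1 else 0)"

text \<open>Sign of reordering e_S e_T into increasing order.\<close>
definition rsign :: "nat set \<Rightarrow> nat set \<Rightarrow> real" where
  "rsign S T = (-1) ^ card {(s, t). s \<in> S \<and> t \<in> T \<and> t < s}"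

definition mv_in :: "nat \<Rightarrow> nat \<Rightarrow> mv \<Rightarrow> bool" where
  "mv_in p q A \<longleftrightarrow> (\<forall>S. \<not> S \<subseteq> {0..<p+q} \<longrightarrow> A S = 0)"

definition scalar :: "real \<Rightarrow> mv" where
  "scalar c = (\<lambda>S. if S = {} then c else 0)"

definition gp :: "nat \<Rightarrow> nat \<Rightarrow> mv \<Rightarrow> mv \<Rightarrow> mv" where
  "gp p q A B = (\<lambda>U. \<Sum>S\<in>Pow {0..<p+q}. \<Sum>T\<in>Pow {0..<p+q}.
      if (S - T) \<union> (T - S) = U
      then A S * B T * rsign S T * (\<Prod>i\<in>S \<inter> T. sig p q i) else 0)"

definition wedge :: "nat \<Rightarrow> nat \<Rightarrow> mv \<Rightarrow> mv \<Rightarrow> mv" where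
  "wedge p q A B = (\<lambda>U. \<Sum>S\<in>Pow {0..<p+q}. \<Sum>T\<in>Pow {0..<p+q}.
      if S \<inter> T = {} \<and> S \<union> T = U then A S * B T * rsign S T else 0)"

definition is_vector :: "nat \<Rightarrow> nat \<Rightarrow> mv \<Rightarrow> bool" where
  "is_vector p q v \<longleftrightarrow> mv_in p q v \<and> (\<forall>S. card S \<noteq> 1 \<longrightarrow> v S = 0)"

definition blade :: "nat \<Rightarrow> nat \<Rightarrow> mv \<Rightarrow> bool" where
  "blade p q B \<longleftrightarrow> (\<exists>c. B = scalar c) \<or>
     (\<exists>vs. (\<forall>v\<in>set vs. is_vector p q v) \<and> B = foldr (wedge p q) vs (scalar 1))"

definition coorthogonal :: "nat \<Rightarrow> nat \<Rightarrow> mv \<Rightarrow> mv \<Rightarrow> bool" where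
  "coorthogonal p q A B \<longleftrightarrow> blade p q A \<and> blade p q B \<and>
     (gp p q A B = gp p q B A \<or> gp p q A B = (\<lambda>S. - gp p q B A S))"

definition ginv :: "nat \<Rightarrow> nat \<Rightarrow> mv \<Rightarrow> mv" where
  "ginv p q B = (THE X. mv_in p q X \<and> gp p q B X = scalar 1 \<and> gp p q X B = scalar 1)"

definition cproj :: "nat \<Rightarrow> nat \<Rightarrow> nat \<Rightarrow> mv \<Rightarrow> mv \<Rightarrow> mv" where
  "cproj p q j B A = (\<lambda>S. if j = 0
      then (A S + gp p q (gp p q (ginv p q B) A) B S) / 2
      else (A S - gp p q (gp p q (ginv p q B) A) B S) / 2)"

text \<open>Forward iteration: first B_1, then B_2, ..., last B_d.\<close>
definition cproj_fwd :: "nat \<Rightarrow> nat \<Rightarrow> nat list \<Rightarrow> mv list \<Rightarrow> mv \<Rightarrow> mv" where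
  "cproj_fwd p q js Bs A = foldl (\<lambda>X (B, j). cproj p q j B X) A (zip Bs js)"

text \<open>Backward iteration: first B_d, then B_{d-1}, ..., last B_1.\<close>
definition cproj_bwd :: "nat \<Rightarrow> nat \<Rightarrow> nat list \<Rightarrow> mv list \<Rightarrow> mv \<Rightarrow> mv" where
  "cproj_bwd p q js Bs A = foldr (\<lambda>(B, j) X. cproj p q j B X) (zip Bs js) A"

end

theory Submission
  imports Defs "HOL-Library.Multiset"
begin

text \<open>Each projection \<open>(X \<plusminus> B\<inverse> X B) / 2\<close> is a linear combination of the identity and the
  conjugation \<open>X \<mapsto> B\<inverse> X B\<close>, which equals \<open>X \<mapsto> B X B / b\<close> when \<open>B B = b \<noteq> 0\<close>. For
  coorthogonal \<open>B\<close>, \<open>C\<close> the two composite conjugations are \<open>(B C) X (C B)\<close> and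
  \<open>(C B) X (B C)\<close> up to the same scalar, and since \<open>B C = \<plusminus>C B\<close> the signs cancel. So all the
  projections commute, and any order of composing them gives the same map. The computations
  rest on associativity of the geometric product, which comes down to an identity for the
  signs of products of basis blades.\<close>

text \<open>\<open>e\<^sub>S e\<^sub>T = basis_sign p q S T \<cdot> e\<^bsub>S \<Delta> T\<^esub>\<close>, and \<open>basis_coeff p q S T U\<close> is the
  coefficient of \<open>e\<^sub>U\<close> in \<open>e\<^sub>S e\<^sub>T\<close>.\<close>

definition basis_sign :: "nat \<Rightarrow> nat \<Rightarrow> nat set \<Rightarrow> nat set \<Rightarrow> real" where
  "basis_sign p q S T = rsign S T * (\<Prod>i\<in>S \<inter> T. sig p q i)"

definition basis_coeff :: "nat \<Rightarrow> nat \<Rightarrow> nat set \<Rightarrow> nat set \<Rightarrow> nat set \<Rightarrow> real" where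
  "basis_coeff p q S T U = (if sym_diff S T = U then basis_sign p q S T else 0)"

lemma gp_eq_basis_coeff:
  "gp p q A B U = (\<Sum>S\<in>Pow {0..<p+q}. \<Sum>T\<in>Pow {0..<p+q}. A S * B T * basis_coeff p q S T U)"
  unfolding gp_def basis_coeff_def basis_sign_def by (auto intro!: sum.cong)

subsection \<open>Signs of products of basis blades\<close>

lemma rsign_empty_left [simp]: "rsign {} T = 1"
  by (simp add: rsign_def)

lemma rsign_empty_right [simp]: "rsign S {} = 1"
  by (simp add: rsign_def)

lemma rsign_square: "rsign S T * rsign S T = 1"
  unfolding rsign_def by (simp flip: power_mult_distrib)

lemma rsign_Un_left:
  assumes "S1 \<inter> S2 = {}" "finite S1" "finite S2" "finite T"
  shows "rsign (S1 \<union> S2) T = rsign S1 T * rsign S2 T"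
proof -
  let ?I = "\<lambda>S. {(s, t). s \<in> S \<and> t \<in> T \<and> t < s}"
  have split: "?I (S1 \<union> S2) = ?I S1 \<union> ?I S2" by auto
  have fin: "finite (?I S)" if "finite S" for S
    by (rule finite_subset[of _ "S \<times> T"]) (use that assms in auto)
  have "card (?I (S1 \<union> S2)) = card (?I S1) + card (?I S2)"
    unfolding split using assms fin by (intro card_Un_disjoint) auto
  then show ?thesis by (simp add: rsign_def power_add)
qed

lemma rsign_Un_right:
  assumes "T1 \<inter> T2 = {}" "finite T1" "finite T2" "finite S"
  shows "rsign S (T1 \<union> T2) = rsign S T1 * rsign S T2"
proof -
  let ?I = "\<lambda>T. {(s, t). s \<in> S \<and> t \<in> T \<and> t < s}"
  have split: "?I (T1 \<union> T2) = ?I T1 \<union> ?I T2" by auto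
  have fin: "finite (?I T)" if "finite T" for T
    by (rule finite_subset[of _ "S \<times> T"]) (use that assms in auto)
  have "card (?I (T1 \<union> T2)) = card (?I T1) + card (?I T2)"
    unfolding split using assms fin by (intro card_Un_disjoint) auto
  then show ?thesis by (simp add: rsign_def power_add)
qed

text \<open>The common part \<open>S \<inter> S'\<close> contributes its sign twice, and \<open>rsign\<close> squares to one.\<close>

lemma rsign_sym_diff_left:
  assumes "finite S" "finite S'" "finite T"
  shows "rsign (sym_diff S S') T = rsign S T * rsign S' T"
proof -
  have split: "rsign X T = rsign (X - Y) T * rsign (X \<inter> Y) T" if "finite X" for X Y
    using rsign_Un_left[of "X - Y" "X \<inter> Y" T] that assms by (auto simp: Un_Diff_Int)
  have "rsign (sym_diff S S') T = rsign (S - S') T * rsign (S' - S) T"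
    using rsign_Un_left[of "S - S'" "S' - S" T] assms by auto
  then show ?thesis
    using split[of S S'] split[of S' S] rsign_square[of "S \<inter> S'" T] assms
    by (simp add: Int_commute algebra_simps)
qed

lemma rsign_sym_diff_right:
  assumes "finite S" "finite T" "finite T'"
  shows "rsign S (sym_diff T T') = rsign S T * rsign S T'"
proof -
  have split: "rsign S X = rsign S (X - Y) * rsign S (X \<inter> Y)" if "finite X" for X Y
    using rsign_Un_right[of "X - Y" "X \<inter> Y" S] that assms by (auto simp: Un_Diff_Int)
  have "rsign S (sym_diff T T') = rsign S (T - T') * rsign S (T' - T)"
    using rsign_Un_right[of "T - T'" "T' - T" S] assms by auto
  then show ?thesis
    using split[of T T'] split[of T' T] rsign_square[of S "T \<inter> T'"] assms
    by (simp add: Int_commute algebra_simps)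
qed
lemma basis_sign_assoc:
  assumes "finite S" "finite T" "finite W"
  shows "basis_sign p q S T * basis_sign p q (sym_diff S T) W
       = basis_sign p q T W * basis_sign p q S (sym_diff T W)"
proof -
  let ?\<pi> = "\<lambda>X. \<Prod>i\<in>X. sig p q i"
  have squares: "?\<pi> (S \<inter> T) * ?\<pi> (sym_diff S T \<inter> W) = ?\<pi> (T \<inter> W) * ?\<pi> (S \<inter> sym_diff T W)"
  proof -
    have "?\<pi> (S \<inter> T) * ?\<pi> (sym_diff S T \<inter> W) = ?\<pi> ((S \<inter> T) \<union> (sym_diff S T \<inter> W))"
      by (rule prod.union_disjoint[symmetric]) (use assms in \<open>simp_all, blast\<close>)
    also have "(S \<inter> T) \<union> (sym_diff S T \<inter> W) = (T \<inter> W) \<union> (S \<inter> sym_diff T W)"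
      by blast
    also have "?\<pi> \<dots> = ?\<pi> (T \<inter> W) * ?\<pi> (S \<inter> sym_diff T W)"
      by (rule prod.union_disjoint) (use assms in \<open>simp_all, blast\<close>)
    finally show ?thesis .
  qed
  have signs: "rsign S T * rsign (sym_diff S T) W = rsign T W * rsign S (sym_diff T W)"
    using rsign_sym_diff_left[OF assms] rsign_sym_diff_right[OF assms] by simp
  have "basis_sign p q S T * basis_sign p q (sym_diff S T) W
      = (rsign S T * rsign (sym_diff S T) W) * (?\<pi> (S \<inter> T) * ?\<pi> (sym_diff S T \<inter> W))"
    by (simp add: basis_sign_def ac_simps)
  also have "\<dots> = (rsign T W * rsign S (sym_diff T W)) * (?\<pi> (T \<inter> W) * ?\<pi> (S \<inter> sym_diff T W))"
    by (simp only: signs squares)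
  also have "\<dots> = basis_sign p q T W * basis_sign p q S (sym_diff T W)"
    by (simp add: basis_sign_def ac_simps)
  finally show ?thesis .
qed

lemma basis_coeff_assoc:
  assumes "finite S" "finite T" "finite W"
  shows "basis_sign p q S T * basis_coeff p q (sym_diff S T) W U
       = basis_sign p q T W * basis_coeff p q S (sym_diff T W) U"
proof -
  have "sym_diff (sym_diff S T) W = sym_diff S (sym_diff T W)" by auto
  then show ?thesis unfolding basis_coeff_def using basis_sign_assoc[OF assms, of p q] by simp
qed

lemma sum_basis_coeff:
  assumes "S \<subseteq> {0..<p+q}" "T \<subseteq> {0..<p+q}"
  shows "(\<Sum>R\<in>Pow {0..<p+q}. basis_coeff p q S T R * g R) = basis_sign p q S T * g (sym_diff S T)"
proof -
  have sym_diff_Pow: "sym_diff S T \<in> Pow {0..<p+q}" using assms by blast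
  have "(\<Sum>R\<in>Pow {0..<p+q}. basis_coeff p q S T R * g R)
      = (\<Sum>R\<in>Pow {0..<p+q}. if sym_diff S T = R then basis_sign p q S T * g (sym_diff S T) else 0)"
    by (intro sum.cong refl) (simp add: basis_coeff_def)
  also have "\<dots> = basis_sign p q S T * g (sym_diff S T)"
    by (subst sum.delta') (simp_all only: sym_diff_Pow if_True finite_Pow_iff finite_atLeastLessThan)
  finally show ?thesis .
qed

lemma gp_gp_left_eq:
  "gp p q (gp p q A B) C U = (\<Sum>S\<in>Pow {0..<p+q}. \<Sum>T\<in>Pow {0..<p+q}. \<Sum>W\<in>Pow {0..<p+q}.
     A S * B T * C W * (basis_sign p q S T * basis_coeff p q (sym_diff S T) W U))"
proof -
  let ?P = "Pow {0..<p+q}"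
  let ?f = "\<lambda>R W S T. A S * B T * C W * (basis_coeff p q S T R * basis_coeff p q R W U)"
  have "gp p q (gp p q A B) C U = (\<Sum>R\<in>?P. \<Sum>W\<in>?P. \<Sum>S\<in>?P. \<Sum>T\<in>?P. ?f R W S T)"
    unfolding gp_eq_basis_coeff[of p q _ C] unfolding gp_eq_basis_coeff
    by (simp add: sum_distrib_right sum_distrib_left ac_simps)
  also have "\<dots> = (\<Sum>W\<in>?P. \<Sum>R\<in>?P. \<Sum>S\<in>?P. \<Sum>T\<in>?P. ?f R W S T)"
    by (rule sum.swap)
  also have "\<dots> = (\<Sum>W\<in>?P. \<Sum>S\<in>?P. \<Sum>R\<in>?P. \<Sum>T\<in>?P. ?f R W S T)"
    by (rule sum.cong[OF refl], rule sum.swap)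
  also have "\<dots> = (\<Sum>W\<in>?P. \<Sum>S\<in>?P. \<Sum>T\<in>?P. \<Sum>R\<in>?P. ?f R W S T)"
    by (rule sum.cong[OF refl], rule sum.cong[OF refl], rule sum.swap)
  also have "\<dots> = (\<Sum>S\<in>?P. \<Sum>W\<in>?P. \<Sum>T\<in>?P. \<Sum>R\<in>?P. ?f R W S T)"
    by (rule sum.swap)
  also have "\<dots> = (\<Sum>S\<in>?P. \<Sum>T\<in>?P. \<Sum>W\<in>?P. \<Sum>R\<in>?P. ?f R W S T)"
    by (rule sum.cong[OF refl], rule sum.swap)
  also have "\<dots> = (\<Sum>S\<in>?P. \<Sum>T\<in>?P. \<Sum>W\<in>?P.
      A S * B T * C W * (basis_sign p q S T * basis_coeff p q (sym_diff S T) W U))"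
    by (intro sum.cong refl) (simp add: sum_distrib_left[symmetric] sum_basis_coeff mult.assoc)
  finally show ?thesis .
qed

lemma gp_gp_right_eq:
  "gp p q A (gp p q B C) U = (\<Sum>S\<in>Pow {0..<p+q}. \<Sum>T\<in>Pow {0..<p+q}. \<Sum>W\<in>Pow {0..<p+q}.
     A S * B T * C W * (basis_sign p q T W * basis_coeff p q S (sym_diff T W) U))"
proof -
  let ?P = "Pow {0..<p+q}"
  let ?f = "\<lambda>S R T W. A S * B T * C W * (basis_coeff p q T W R * basis_coeff p q S R U)"
  have "gp p q A (gp p q B C) U = (\<Sum>S\<in>?P. \<Sum>R\<in>?P. \<Sum>T\<in>?P. \<Sum>W\<in>?P. ?f S R T W)"
    unfolding gp_eq_basis_coeff[of p q A _] unfolding gp_eq_basis_coeff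
    by (simp add: sum_distrib_right sum_distrib_left ac_simps)
  also have "\<dots> = (\<Sum>S\<in>?P. \<Sum>T\<in>?P. \<Sum>R\<in>?P. \<Sum>W\<in>?P. ?f S R T W)"
    by (rule sum.cong[OF refl], rule sum.swap)
  also have "\<dots> = (\<Sum>S\<in>?P. \<Sum>T\<in>?P. \<Sum>W\<in>?P. \<Sum>R\<in>?P. ?f S R T W)"
    by (rule sum.cong[OF refl], rule sum.cong[OF refl], rule sum.swap)
  also have "\<dots> = (\<Sum>S\<in>?P. \<Sum>T\<in>?P. \<Sum>W\<in>?P.
      A S * B T * C W * (basis_sign p q T W * basis_coeff p q S (sym_diff T W) U))"
    by (intro sum.cong refl) (simp add: sum_distrib_left[symmetric] sum_basis_coeff mult.assoc)
  finally show ?thesis .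
qed

lemma gp_assoc: "gp p q (gp p q A B) C = gp p q A (gp p q B C)"
  unfolding fun_eq_iff gp_gp_left_eq gp_gp_right_eq
  by (intro allI sum.cong refl) (simp add: basis_coeff_assoc finite_subset)

lemma gp_lin_left:
  "gp p q (\<lambda>S. a * X S + c * Y S) Z = (\<lambda>U. a * gp p q X Z U + c * gp p q Y Z U)"
  by (rule ext) (simp add: gp_eq_basis_coeff sum_distrib_left sum.distrib algebra_simps)

lemma gp_lin_right:
  "gp p q Z (\<lambda>S. a * X S + c * Y S) = (\<lambda>U. a * gp p q Z X U + c * gp p q Z Y U)"
  by (rule ext) (simp add: gp_eq_basis_coeff sum_distrib_left sum.distrib algebra_simps)

lemma gp_smult_left: "gp p q (\<lambda>S. a * X S) Z = (\<lambda>U. a * gp p q X Z U)"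
  by (rule ext) (simp add: gp_eq_basis_coeff sum_distrib_left algebra_simps)

lemma gp_smult_right: "gp p q Z (\<lambda>S. a * X S) = (\<lambda>U. a * gp p q Z X U)"
  by (rule ext) (simp add: gp_eq_basis_coeff sum_distrib_left algebra_simps)

lemma gp_uminus_left: "gp p q (\<lambda>S. - X S) Z = (\<lambda>U. - gp p q X Z U)"
  using gp_smult_left[of p q "-1" X Z] by simp

lemma gp_uminus_right: "gp p q Z (\<lambda>S. - X S) = (\<lambda>U. - gp p q Z X U)"
  using gp_smult_right[of p q Z "-1" X] by simp

lemma gp_scalar_left:
  assumes "mv_in p q X"
  shows "gp p q (scalar a) X = (\<lambda>U. a * X U)"
proof (rule ext)
  fix U
  let ?P = "Pow {0..<p+q}"
  have "gp p q (scalar a) X U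
      = (\<Sum>S\<in>?P. if S = {} then (\<Sum>T\<in>?P. a * X T * basis_coeff p q {} T U) else 0)"
    unfolding gp_eq_basis_coeff scalar_def by (rule sum.cong) auto
  also have "\<dots> = (\<Sum>T\<in>?P. a * X T * basis_coeff p q {} T U)"
    by (simp add: sum.delta')
  also have "\<dots> = (\<Sum>T\<in>?P. if T = U then a * X U else 0)"
    by (rule sum.cong) (auto simp: basis_coeff_def basis_sign_def)
  also have "\<dots> = a * X U"
    using assms by (auto simp: sum.delta' mv_in_def)
  finally show "gp p q (scalar a) X U = a * X U" .
qed

lemma gp_scalar_right:
  assumes "mv_in p q X"
  shows "gp p q X (scalar a) = (\<lambda>U. a * X U)"
proof (rule ext)
  fix U
  let ?P = "Pow {0..<p+q}"
  have "gp p q X (scalar a) U = (\<Sum>S\<in>?P. \<Sum>T\<in>?P. if T = {} then X S * a * basis_coeff p q S {} U else 0)"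
    unfolding gp_eq_basis_coeff scalar_def by (intro sum.cong) auto
  also have "\<dots> = (\<Sum>S\<in>?P. X S * a * basis_coeff p q S {} U)"
    by (simp add: sum.delta')
  also have "\<dots> = (\<Sum>S\<in>?P. if S = U then a * X U else 0)"
    by (rule sum.cong) (auto simp: basis_coeff_def basis_sign_def)
  also have "\<dots> = a * X U"
    using assms by (auto simp: sum.delta' mv_in_def)
  finally show "gp p q X (scalar a) U = a * X U" .
qed

lemma mv_in_scalar: "mv_in p q (scalar c)"
  by (auto simp: mv_in_def scalar_def)

lemma mv_in_wedge: "mv_in p q (wedge p q A B)"
  unfolding mv_in_def wedge_def
proof (intro allI impI ext)
  fix U assume "\<not> U \<subseteq> {0..<p + q}"
  then have "\<forall>S\<in>Pow {0..<p+q}. \<forall>T\<in>Pow {0..<p+q}. \<not> (S \<inter> T = {} \<and> S \<union> T = U)" by blast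
  then show "(\<Sum>S\<in>Pow {0..<p+q}. \<Sum>T\<in>Pow {0..<p+q}.
      if S \<inter> T = {} \<and> S \<union> T = U then A S * B T * rsign S T else 0) = 0"
    by (intro sum.neutral ballI) auto
qed

lemma blade_imp_mv_in: "blade p q B \<Longrightarrow> mv_in p q B"
  unfolding blade_def
proof (elim disjE exE conjE)
  fix vs assume "B = foldr (wedge p q) vs (scalar 1)"
  then show "mv_in p q B" by (cases vs) (auto simp: mv_in_scalar mv_in_wedge)
qed (auto simp: mv_in_scalar)

subsection \<open>Conjugation by a blade with scalar square\<close>

lemma ginv_eq_scaled:
  assumes "mv_in p q B" and BB: "gp p q B B = scalar b" and "b \<noteq> 0"
  shows "ginv p q B = (\<lambda>S. (1/b) * B S)"
proof -
  let ?B' = "\<lambda>S. (1/b) * B S"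
  have mv_in_B': "mv_in p q ?B'" using assms(1) by (simp add: mv_in_def)
  have "(\<lambda>U. (1/b) * scalar b U) = scalar 1"
    using \<open>b \<noteq> 0\<close> by (auto simp: scalar_def fun_eq_iff)
  then have right: "gp p q B ?B' = scalar 1" and left: "gp p q ?B' B = scalar 1"
    by (simp_all only: gp_smult_left gp_smult_right BB)
  have "X = ?B'" if "mv_in p q X" "gp p q X B = scalar 1" for X
  proof -
    have "X = gp p q X (gp p q B ?B')"
      unfolding right gp_scalar_right[OF \<open>mv_in p q X\<close>] by simp
    also have "\<dots> = ?B'"
      unfolding gp_assoc[symmetric] \<open>gp p q X B = scalar 1\<close> gp_scalar_left[OF mv_in_B'] by simp
    finally show ?thesis .
  qed
  then show ?thesis unfolding ginv_def
    by (intro the1_equality) (use mv_in_B' left right in blast)+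
qed

definition gconj :: "nat \<Rightarrow> nat \<Rightarrow> mv \<Rightarrow> mv \<Rightarrow> mv" where
  "gconj p q B X = gp p q (gp p q (ginv p q B) X) B"

lemma gconj_eq_scaled:
  assumes "mv_in p q B" "gp p q B B = scalar b" "b \<noteq> 0"
  shows "gconj p q B X = (\<lambda>U. (1/b) * gp p q (gp p q B X) B U)"
  unfolding gconj_def ginv_eq_scaled[OF assms] by (simp only: gp_smult_left)

lemma gconj_commute:
  assumes "mv_in p q B" "gp p q B B = scalar b" "b \<noteq> 0"
    and "mv_in p q C" "gp p q C C = scalar c" "c \<noteq> 0"
    and "gp p q B C = gp p q C B \<or> gp p q B C = (\<lambda>S. - gp p q C B S)"
  shows "gconj p q B (gconj p q C X) = gconj p q C (gconj p q B X)"
proof -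
  have BC: "gconj p q B (gconj p q C X)
      = (\<lambda>U. (1/b) * ((1/c) * gp p q (gp p q (gp p q B C) X) (gp p q C B) U))"
    unfolding gconj_eq_scaled[OF assms(1-3)] gconj_eq_scaled[OF assms(4-6)]
    by (simp only: gp_smult_left gp_smult_right gp_assoc)
  have CB: "gconj p q C (gconj p q B X)
      = (\<lambda>U. (1/c) * ((1/b) * gp p q (gp p q (gp p q C B) X) (gp p q B C) U))"
    unfolding gconj_eq_scaled[OF assms(1-3)] gconj_eq_scaled[OF assms(4-6)]
    by (simp only: gp_smult_left gp_smult_right gp_assoc)
  from assms(7) show ?thesis
  proof
    assume "gp p q B C = gp p q C B"
    then show ?thesis unfolding BC CB by (simp add: mult.commute)
  next
    assume "gp p q B C = (\<lambda>S. - gp p q C B S)"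
    then show ?thesis unfolding BC CB by (simp add: gp_uminus_left gp_uminus_right mult.commute)
  qed
qed

lemma coorthogonal_gconj_commute:
  assumes "coorthogonal p q B C"
    and "gp p q B B = scalar b" "b \<noteq> 0" "gp p q C C = scalar c" "c \<noteq> 0"
  shows "gconj p q B (gconj p q C X) = gconj p q C (gconj p q B X)"
  using assms gconj_commute blade_imp_mv_in unfolding coorthogonal_def by blast

subsection \<open>Commuting projections\<close>

lemma cproj_eq_gconj:
  "cproj p q j B X = (\<lambda>S. (1/2) * X S + ((if j = 0 then 1 else -1) / 2) * gconj p q B X S)"
  by (auto simp: cproj_def gconj_def fun_eq_iff)

lemma gconj_lin:
  "gconj p q B (\<lambda>S. a * X S + c * Y S) = (\<lambda>U. a * gconj p q B X U + c * gconj p q B Y U)"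
  unfolding gconj_def by (simp add: gp_lin_right gp_lin_left)

lemma cproj_commute:
  assumes "\<And>X. gconj p q B (gconj p q C X) = gconj p q C (gconj p q B X)"
  shows "cproj p q j B \<circ> cproj p q k C = cproj p q k C \<circ> cproj p q j B"
  unfolding comp_def cproj_eq_gconj gconj_lin using assms by (simp add: fun_eq_iff algebra_simps)

lemma cproj_fwd_eq_fold:
  "cproj_fwd p q js Bs A = fold (\<lambda>(B, j). cproj p q j B) (zip Bs js) A"
  by (simp add: cproj_fwd_def foldl_conv_fold case_prod_unfold)

lemma cproj_bwd_eq_fold:
  "cproj_bwd p q js Bs A = fold (\<lambda>(B, j). cproj p q j B) (rev (zip Bs js)) A"
  by (simp add: cproj_bwd_def foldr_conv_fold case_prod_unfold)

lemma
  assumes "\<sigma> permutes {..<length Bs}" "length js = length Bs"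
    and "\<And>i k. i < length Bs \<Longrightarrow> k < length Bs \<Longrightarrow>
      cproj p q (js ! i) (Bs ! i) \<circ> cproj p q (js ! k) (Bs ! k)
      = cproj p q (js ! k) (Bs ! k) \<circ> cproj p q (js ! i) (Bs ! i)"
  shows cproj_fwd_permute_list:
      "cproj_fwd p q (permute_list \<sigma> js) (permute_list \<sigma> Bs) A = cproj_fwd p q js Bs A"
    and cproj_bwd_permute_list:
      "cproj_bwd p q (permute_list \<sigma> js) (permute_list \<sigma> Bs) A = cproj_bwd p q js Bs A"
proof -
  let ?f = "\<lambda>(B, j). cproj p q j B"
  have zip_permute: "zip (permute_list \<sigma> Bs) (permute_list \<sigma> js) = permute_list \<sigma> (zip Bs js)"
    using assms(1,2) by (simp add: permute_list_zip)
  have same_mset: "mset (permute_list \<sigma> (zip Bs js)) = mset (zip Bs js)"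
    using assms(1,2) by simp
  have commute: "?f x \<circ> ?f y = ?f y \<circ> ?f x"
    if "x \<in> set (permute_list \<sigma> (zip Bs js))" "y \<in> set (permute_list \<sigma> (zip Bs js))" for x y
    using that assms by (auto simp: set_zip)
  show "cproj_fwd p q (permute_list \<sigma> js) (permute_list \<sigma> Bs) A = cproj_fwd p q js Bs A"
    unfolding cproj_fwd_eq_fold zip_permute
    by (rule fun_cong[OF fold_multiset_equiv]) (use commute same_mset in simp_all)
  show "cproj_bwd p q (permute_list \<sigma> js) (permute_list \<sigma> Bs) A = cproj_bwd p q js Bs A"
    unfolding cproj_bwd_eq_fold zip_permute
    by (rule fun_cong[OF fold_multiset_equiv]) (use commute same_mset in simp_all)
qed

theorem lemma3p4:
  fixes p q d :: nat and Bs :: "mv list" and js :: "nat list" and A :: mv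
    and \<sigma> :: "nat \<Rightarrow> nat"
  assumes "length Bs = d" and "length js = d"
    and "\<forall>k<d. blade p q (Bs ! k)"
    and "\<forall>k<d. \<forall>l<d. k \<noteq> l \<longrightarrow> coorthogonal p q (Bs ! k) (Bs ! l)"
    and "\<forall>k<d. \<exists>c. c \<noteq> 0 \<and> gp p q (Bs ! k) (Bs ! k) = scalar c"
    and "mv_in p q A"
    and "\<forall>j\<in>set js. j \<in> {0, 1}"
    and "\<sigma> permutes {0..<d}"
  shows "cproj_fwd p q (map (\<lambda>i. js ! \<sigma> i) [0..<d]) (map (\<lambda>i. Bs ! \<sigma> i) [0..<d]) A
           = cproj_fwd p q js Bs A
       \<and> cproj_bwd p q (map (\<lambda>i. js ! \<sigma> i) [0..<d]) (map (\<lambda>i. Bs ! \<sigma> i) [0..<d]) A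
           = cproj_bwd p q js Bs A"
proof -
  have \<sigma>: "\<sigma> permutes {..<length Bs}"
    using assms(1,8) by (simp add: atLeast0LessThan)
  have permute: "map (\<lambda>i. js ! \<sigma> i) [0..<d] = permute_list \<sigma> js"
    "map (\<lambda>i. Bs ! \<sigma> i) [0..<d] = permute_list \<sigma> Bs"
    using assms(1,2) by (simp_all add: permute_list_def)
  have "gconj p q (Bs ! i) (gconj p q (Bs ! k) X) = gconj p q (Bs ! k) (gconj p q (Bs ! i) X)"
    if "i < d" "k < d" for i k X
  proof (cases "i = k")
    case False
    with that assms(4,5) show ?thesis by (blast intro: coorthogonal_gconj_commute)
  qed simp
  then have "cproj p q (js ! i) (Bs ! i) \<circ> cproj p q (js ! k) (Bs ! k)
      = cproj p q (js ! k) (Bs ! k) \<circ> cproj p q (js ! i) (Bs ! i)"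
    if "i < length Bs" "k < length Bs" for i k
    using cproj_commute that assms(1) by blast
  then show ?thesis
    unfolding permute using cproj_fwd_permute_list[OF \<sigma>] cproj_bwd_permute_list[OF \<sigma>] assms(1,2)
    by simp
qed

end
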